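(* For all $x \in \mathcal{X}$ and $y \in \mathcal{Y}$, $P_{Y|X}(y|x) = P^{(k^* )}_{Y|X}(y|x)$, and consequently $\hat y^{(k^* )}(x) = \hat y_{\mathrm{MAP}}(x)$, where $\hat y_{\mathrm{MAP}}(x) = \arg\max_{y \in \mathcal{Y}} P_{Y|X}(y|x)$.
   Context: $X, Y$ are random variables on finite alphabets with joint distribution $P_{X,Y}$. By the modal decomposition, $P_{X,Y}(x,y) = P_X(x) P_Y(y)\left(1 + \sum_{i=1}^K \sigma_i f_i^*(x) g_i^*(y)\right)$ with $\sigma_1 \ge \dots \ge \sigma_K > 0$ and $\mathbb{E}[f_i^*(X) f_j^*(X)] = \mathbb{E}[g_i^*(Y) g_j^*(Y)] = \mathbb{1}\{i=j\}$; let $f^* = (f_1^*,\dots,f_K^* )^T$. The maximal correlation kernel is $k^*(x,x') = f^{*T}(x)\Lambda_{f^*}^{-1} f^*(x')$, the projection kernel of $\mathrm{span}\{f^*\}$, where $\Lambda_{f^*} = \mathbb{E}[f^*(X) f^{*T}(X)]$. For a kernel $k$, the centered kernel is $\tilde k(x,x') = k(x,x') - \bar k(x) - \bar k(x') + \mathbb{E}_{P_X}[\bar k(X)]$ with $\bar k(x) = \mathbb{E}_{P_X}[k(X,x)]$; the kernelized discriminative model is $P^{(k)}_{Y|X}(y|x) = P_Y(y)\left(1 + \mathbb{E}[\tilde k(X, x) \mid Y = y]\right)$, and $\hat y^{(k)}(x) = \arg\max_{y} P^{(k)}_{Y|X}(y|x)$. *)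

theory Defs
  imports "HOL-Analysis.Analysis" "Jordan_Normal_Form.Gauss_Jordan_Elimination"
begin

definition margX :: "('x::finite \<Rightarrow> 'y::finite \<Rightarrow> real) \<Rightarrow> 'x \<Rightarrow> real" where
  "margX P x = (\<Sum>y\<in>UNIV. P x y)"

definition margY :: "('x::finite \<Rightarrow> 'y::finite \<Rightarrow> real) \<Rightarrow> 'y \<Rightarrow> real" where
  "margY P y = (\<Sum>x\<in>UNIV. P x y)"

definition expX :: "('x::finite \<Rightarrow> 'y::finite \<Rightarrow> real) \<Rightarrow> ('x \<Rightarrow> real) \<Rightarrow> real" where
  "expX P h = (\<Sum>x\<in>UNIV. margX P x * h x)"

definition expY :: "('x::finite \<Rightarrow> 'y::finite \<Rightarrow> real) \<Rightarrow> ('y \<Rightarrow> real) \<Rightarrow> real" where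
  "expY P h = (\<Sum>y\<in>UNIV. margY P y * h y)"

definition condExpX :: "('x::finite \<Rightarrow> 'y::finite \<Rightarrow> real) \<Rightarrow> ('x \<Rightarrow> real) \<Rightarrow> 'y \<Rightarrow> real" where
  "condExpX P h y = (\<Sum>x\<in>UNIV. P x y / margY P y * h x)"

definition condYX :: "('x::finite \<Rightarrow> 'y::finite \<Rightarrow> real) \<Rightarrow> 'y \<Rightarrow> 'x \<Rightarrow> real" where
  "condYX P y x = P x y / margX P x"

(* Modal decomposition of P with K modes, singular values \<sigma>_1..\<sigma>_K (indexed 0..K-1),
   and feature functions f_i, g_i *)
definition modal_decomposition ::
  "('x::finite \<Rightarrow> 'y::finite \<Rightarrow> real) \<Rightarrow> nat \<Rightarrow> (nat \<Rightarrow> real) \<Rightarrow> (nat \<Rightarrow> 'x \<Rightarrow> real)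
     \<Rightarrow> (nat \<Rightarrow> 'y \<Rightarrow> real) \<Rightarrow> bool" where
  "modal_decomposition P K \<sigma> f g \<longleftrightarrow>
     (\<forall>x y. P x y = margX P x * margY P y * (1 + (\<Sum>i<K. \<sigma> i * f i x * g i y))) \<and>
     (\<forall>i j. i \<le> j \<longrightarrow> j < K \<longrightarrow> \<sigma> j \<le> \<sigma> i) \<and>
     (\<forall>i<K. \<sigma> i > 0) \<and>
     (\<forall>i<K. \<forall>j<K. expX P (\<lambda>x. f i x * f j x) = (if i = j then 1 else 0)) \<and>
     (\<forall>i<K. \<forall>j<K. expY P (\<lambda>y. g i y * g j y) = (if i = j then 1 else 0))"

definition Lambda_f :: "('x::finite \<Rightarrow> 'y::finite \<Rightarrow> real) \<Rightarrow> nat \<Rightarrow> (nat \<Rightarrow> 'x \<Rightarrow> real) \<Rightarrow> real mat" where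
  "Lambda_f P K f = mat K K (\<lambda>(i, j). expX P (\<lambda>x. f i x * f j x))"

definition feat_vec :: "nat \<Rightarrow> (nat \<Rightarrow> 'x \<Rightarrow> real) \<Rightarrow> 'x \<Rightarrow> real vec" where
  "feat_vec K f x = vec K (\<lambda>i. f i x)"

definition max_corr_kernel ::
  "('x::finite \<Rightarrow> 'y::finite \<Rightarrow> real) \<Rightarrow> nat \<Rightarrow> (nat \<Rightarrow> 'x \<Rightarrow> real) \<Rightarrow> 'x \<Rightarrow> 'x \<Rightarrow> real" where
  "max_corr_kernel P K f x x' =
     feat_vec K f x \<bullet> (the (mat_inverse (Lambda_f P K f)) *\<^sub>v feat_vec K f x')"

definition kbar :: "('x::finite \<Rightarrow> 'y::finite \<Rightarrow> real) \<Rightarrow> ('x \<Rightarrow> 'x \<Rightarrow> real) \<Rightarrow> 'x \<Rightarrow> real" where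
  "kbar P k x = expX P (\<lambda>x0. k x0 x)"

definition centered_kernel ::
  "('x::finite \<Rightarrow> 'y::finite \<Rightarrow> real) \<Rightarrow> ('x \<Rightarrow> 'x \<Rightarrow> real) \<Rightarrow> 'x \<Rightarrow> 'x \<Rightarrow> real" where
  "centered_kernel P k x x' = k x x' - kbar P k x - kbar P k x' + expX P (kbar P k)"

definition kernel_model ::
  "('x::finite \<Rightarrow> 'y::finite \<Rightarrow> real) \<Rightarrow> ('x \<Rightarrow> 'x \<Rightarrow> real) \<Rightarrow> 'y \<Rightarrow> 'x \<Rightarrow> real" where
  "kernel_model P k y x = margY P y * (1 + condExpX P (\<lambda>x0. centered_kernel P k x0 x) y)"

definition argmax_set :: "('y \<Rightarrow> real) \<Rightarrow> 'y set" where
  "argmax_set Q = {y. \<forall>y'. Q y' \<le> Q y}"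

end

theory Submission
  imports Defs
begin

text \<open>Orthonormality makes \<open>\<Lambda>\<^sub>f\<close> the identity, so \<open>k*(x,x') = \<Sum>\<^sub>i f\<^sub>i(x) f\<^sub>i(x')\<close>.
  The decomposition says that, given \<open>Y = y\<close>, the law of \<open>X\<close> has density
  \<open>1 + \<Sum>\<^sub>i \<sigma>\<^sub>i f\<^sub>i(x) g\<^sub>i(y)\<close> with respect to \<open>P\<^sub>X\<close>. Taking the conditional mean of the
  constant \<open>1\<close> and using orthonormality of the \<open>g\<^sub>i\<close> shows that every \<open>f\<^sub>i\<close> is centred,
  so \<open>k*\<close> is its own centred kernel; taking the conditional mean of \<open>f\<^sub>i\<close> gives
  \<open>E[f\<^sub>i(X) | Y = y] = \<sigma>\<^sub>i g\<^sub>i(y)\<close>. Substituting, the kernel model is the decomposition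
  divided by \<open>P\<^sub>X(x)\<close>, i.e. the true posterior.\<close>

lemma mat_inverse_one: "the (mat_inverse (1\<^sub>m n :: 'a :: field mat)) = 1\<^sub>m n"
proof -
  have "(1\<^sub>m n :: 'a mat) \<in> Units (ring_mat TYPE('a) n ())"
    unfolding Units_def by (auto simp: ring_mat_simps intro!: bexI[of _ "1\<^sub>m n"])
  then obtain B where B: "mat_inverse (1\<^sub>m n :: 'a mat) = Some B"
    using mat_inverse(1)[of "1\<^sub>m n :: 'a mat" n "()"] by fastforce
  then have "1\<^sub>m n * B = 1\<^sub>m n" "B \<in> carrier_mat n n"
    using mat_inverse(2)[OF one_carrier_mat] by auto
  with B show ?thesis by simp
qed

lemma expX_sum: "expX P (\<lambda>x. \<Sum>i\<in>I. h i x) = (\<Sum>i\<in>I. expX P (h i))"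
  unfolding expX_def by (simp add: sum_distrib_left sum.swap[of _ I])

lemma expX_mult_left: "expX P (\<lambda>x. c * h x) = c * expX P h"
  unfolding expX_def by (simp add: sum_distrib_left mult.left_commute)

lemma expX_mult_right: "expX P (\<lambda>x. h x * c) = expX P h * c"
  unfolding expX_def by (simp add: sum_distrib_right mult.assoc)

lemma expX_add: "expX P (\<lambda>x. h x + h' x) = expX P h + expX P h'"
  unfolding expX_def by (simp add: distrib_left sum.distrib)

lemma expX_const: "expX P (\<lambda>_. c) = c * (\<Sum>x\<in>UNIV. \<Sum>y\<in>UNIV. P x y)"
  unfolding expX_def margX_def by (simp add: sum_distrib_left mult_ac)

lemma expY_sum: "expY P (\<lambda>y. \<Sum>i\<in>I. h i y) = (\<Sum>i\<in>I. expY P (h i))"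
  unfolding expY_def by (simp add: sum_distrib_left sum.swap[of _ I])

lemma expY_mult_left: "expY P (\<lambda>y. c * h y) = c * expY P h"
  unfolding expY_def by (simp add: sum_distrib_left mult.left_commute)

lemma condExpX_sum: "condExpX P (\<lambda>x. \<Sum>i\<in>I. h i x) y = (\<Sum>i\<in>I. condExpX P (h i) y)"
  unfolding condExpX_def by (simp add: sum_distrib_left sum.swap[of _ I])

lemma condExpX_mult_right: "condExpX P (\<lambda>x. h x * c) y = condExpX P h y * c"
  unfolding condExpX_def by (simp add: sum_distrib_right mult.assoc)

lemma condExpX_one: "margY P y \<noteq> 0 \<Longrightarrow> condExpX P (\<lambda>_. 1) y = 1"
  unfolding condExpX_def by (simp add: margY_def flip: sum_divide_distrib)

lemma Lambda_f_orthonormal: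
  assumes "\<And>i j. i < K \<Longrightarrow> j < K \<Longrightarrow> expX P (\<lambda>x. f i x * f j x) = (if i = j then 1 else 0)"
  shows "Lambda_f P K f = 1\<^sub>m K"
  unfolding Lambda_f_def by (rule eq_matI) (auto simp: assms)

lemma max_corr_kernel_orthonormal:
  assumes "\<And>i j. i < K \<Longrightarrow> j < K \<Longrightarrow> expX P (\<lambda>x. f i x * f j x) = (if i = j then 1 else 0)"
  shows "max_corr_kernel P K f x x' = (\<Sum>i<K. f i x * f i x')"
proof -
  have "Lambda_f P K f = 1\<^sub>m K"
    using assms by (rule Lambda_f_orthonormal)
  then have "the (mat_inverse (Lambda_f P K f)) = 1\<^sub>m K"
    by (simp add: mat_inverse_one)
  then show ?thesis
    unfolding max_corr_kernel_def feat_vec_def by (simp add: scalar_prod_def lessThan_atLeast0)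
qed

lemma centered_kernel_eq_self:
  assumes "\<And>x. kbar P k x = 0"
  shows "centered_kernel P k = k"
  using assms by (intro ext) (simp add: centered_kernel_def expX_def)

lemma
  assumes "modal_decomposition P K \<sigma> f g"
  shows modal_decomposition_eq:
      "P x y = margX P x * margY P y * (1 + (\<Sum>i<K. \<sigma> i * f i x * g i y))"
    and modal_decomposition_pos: "i < K \<Longrightarrow> \<sigma> i > 0"
    and modal_decomposition_orthonormal_f:
      "i < K \<Longrightarrow> j < K \<Longrightarrow> expX P (\<lambda>x. f i x * f j x) = (if i = j then 1 else 0)"
    and modal_decomposition_orthonormal_g:
      "i < K \<Longrightarrow> j < K \<Longrightarrow> expY P (\<lambda>y. g i y * g j y) = (if i = j then 1 else 0)"
  using assms unfolding modal_decomposition_def by simp_all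
lemma modal_decomposition_condExpX:
  assumes modal: "modal_decomposition P K \<sigma> f g" and "margY P y \<noteq> 0"
  shows "condExpX P h y = expX P h + (\<Sum>i<K. \<sigma> i * g i y * expX P (\<lambda>x. f i x * h x))"
proof -
  have "P x y / margY P y * h x = margX P x * (h x + (\<Sum>i<K. \<sigma> i * g i y * (f i x * h x)))" for x
  proof -
    have "P x y / margY P y * h x = margX P x * (1 + (\<Sum>i<K. \<sigma> i * f i x * g i y)) * h x"
      using \<open>margY P y \<noteq> 0\<close> by (simp add: modal_decomposition_eq[OF modal])
    also have "\<dots> = margX P x * (h x + (\<Sum>i<K. \<sigma> i * g i y * (f i x * h x)))"
      by (simp add: ring_distribs sum_distrib_left sum_distrib_right mult_ac)
    finally show ?thesis .
  qed
  then have "condExpX P h y = expX P (\<lambda>x. h x + (\<Sum>i<K. \<sigma> i * g i y * (f i x * h x)))"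
    unfolding condExpX_def expX_def by simp
  then show ?thesis
    by (simp add: expX_add expX_sum expX_mult_left)
qed

lemma modal_decomposition_mean_zero:
  assumes modal: "modal_decomposition P K \<sigma> f g"
    and total: "(\<Sum>x\<in>UNIV. \<Sum>y\<in>UNIV. P x y) = 1"
    and margY_nz: "\<And>y. margY P y \<noteq> 0"
    and "j < K"
  shows "expX P (f j) = 0"
proof -
  have balance: "(\<Sum>i<K. \<sigma> i * g i y * expX P (f i)) = 0" for y
    using modal_decomposition_condExpX[OF modal margY_nz, of "\<lambda>_. 1"]
    by (simp add: condExpX_one[OF margY_nz] expX_const total)
  have "0 = expY P (\<lambda>y. g j y * (\<Sum>i<K. \<sigma> i * g i y * expX P (f i)))"
    by (simp add: balance expY_def)
  also have "\<dots> = expY P (\<lambda>y. \<Sum>i<K. \<sigma> i * expX P (f i) * (g i y * g j y))"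
    by (simp add: sum_distrib_left mult_ac)
  also have "\<dots> = (\<Sum>i<K. \<sigma> i * expX P (f i) * expY P (\<lambda>y. g i y * g j y))"
    by (simp add: expY_sum expY_mult_left)
  also have "\<dots> = (\<Sum>i<K. if i = j then \<sigma> j * expX P (f j) else 0)"
    by (intro sum.cong) (simp_all add: modal_decomposition_orthonormal_g[OF modal] \<open>j < K\<close>)
  also have "\<dots> = \<sigma> j * expX P (f j)"
    using \<open>j < K\<close> by simp
  finally show ?thesis
    using modal_decomposition_pos[OF modal \<open>j < K\<close>] by simp
qed

lemma modal_decomposition_condExpX_feature:
  assumes modal: "modal_decomposition P K \<sigma> f g"
    and total: "(\<Sum>x\<in>UNIV. \<Sum>y\<in>UNIV. P x y) = 1"
    and margY_nz: "\<And>y. margY P y \<noteq> 0"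
    and "j < K"
  shows "condExpX P (f j) y = \<sigma> j * g j y"
proof -
  have "condExpX P (f j) y = (\<Sum>i<K. \<sigma> i * g i y * expX P (\<lambda>x. f i x * f j x))"
    using modal_decomposition_condExpX[OF modal margY_nz]
    by (simp add: modal_decomposition_mean_zero[OF assms])
  also have "\<dots> = (\<Sum>i<K. if i = j then \<sigma> j * g j y else 0)"
    by (intro sum.cong) (simp_all add: modal_decomposition_orthonormal_f[OF modal] \<open>j < K\<close>)
  finally show ?thesis
    using \<open>j < K\<close> by simp
qed

lemma modal_decomposition_kernel_model:
  assumes modal: "modal_decomposition P K \<sigma> f g"
    and total: "(\<Sum>x\<in>UNIV. \<Sum>y\<in>UNIV. P x y) = 1"
    and margX_nz: "margX P x \<noteq> 0"
    and margY_nz: "\<And>y. margY P y \<noteq> 0"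
  shows "kernel_model P (max_corr_kernel P K f) y x = condYX P y x"
proof -
  have kernel: "max_corr_kernel P K f = (\<lambda>x0 x. \<Sum>i<K. f i x0 * f i x)"
    using modal_decomposition_orthonormal_f[OF modal]
    by (intro ext max_corr_kernel_orthonormal)
  have "kbar P (max_corr_kernel P K f) x' = 0" for x'
    unfolding kbar_def kernel
    by (simp add: expX_sum expX_mult_right modal_decomposition_mean_zero[OF modal total margY_nz])
  then have centered: "centered_kernel P (max_corr_kernel P K f) = (\<lambda>x0 x. \<Sum>i<K. f i x0 * f i x)"
    unfolding kernel by (rule centered_kernel_eq_self)
  have "condExpX P (\<lambda>x0. centered_kernel P (max_corr_kernel P K f) x0 x) y
      = (\<Sum>i<K. \<sigma> i * f i x * g i y)"
    unfolding centered
    by (simp add: condExpX_sum condExpX_mult_right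
        modal_decomposition_condExpX_feature[OF modal total margY_nz] mult_ac)
  then show ?thesis
    using margX_nz
    by (simp add: kernel_model_def condYX_def modal_decomposition_eq[OF modal, of x y])
qed

theorem mainTheorem4:
  fixes P :: "'x::finite \<Rightarrow> 'y::finite \<Rightarrow> real"
    and K :: nat and \<sigma> :: "nat \<Rightarrow> real"
    and f :: "nat \<Rightarrow> 'x \<Rightarrow> real" and g :: "nat \<Rightarrow> 'y \<Rightarrow> real"
  assumes nonneg: "\<And>x y. P x y \<ge> 0"
    and total: "(\<Sum>x\<in>UNIV. \<Sum>y\<in>UNIV. P x y) = 1"
    and posX: "\<And>x. margX P x > 0"
    and posY: "\<And>y. margY P y > 0"
    and modal: "modal_decomposition P K \<sigma> f g"
  shows "(\<forall>x y. condYX P y x = kernel_model P (max_corr_kernel P K f) y x) \<and>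
         (\<forall>x. argmax_set (\<lambda>y. kernel_model P (max_corr_kernel P K f) y x)
               = argmax_set (\<lambda>y. condYX P y x))"
proof -
  have margY_nz: "margY P y \<noteq> 0" for y
    using posY[of y] by simp
  have "kernel_model P (max_corr_kernel P K f) y x = condYX P y x" for x y
    using modal_decomposition_kernel_model[OF modal total _ margY_nz] posX[of x] by simp
  then show ?thesis
    by simp
qed

end
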